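(* The constrained equal-distance rule and the proportional rule are obviously manipulable on $\mathcal{E}_{\mathcal{SP}}$.
   Context: Let $N=\{1,\dots,n\}$ be a finite set of agents. A preference $R_i$ is a continuous complete preorder on $\mathbb{R}_+\cup\{\infty\}$ ($P_i$ strict part); its peak $p(R_i)$ is the set of maximal elements. $R_i$ is single-peaked if $p(R_i)$ is a singleton (identified with its element) and for $x,x'\in\mathbb{R}_+$, $xP_ix'$ whenever $x'<x\le p(R_i)$ or $p(R_i)\le x<x'$; $\mathcal{SP}$ is the set of these. An economy is $(R,\Omega)$, $R\in\mathcal{SP}^n$, $\Omega>0$; $\mathcal{E}_{\mathcal{SP}}$ is the set of economies; a rule is a map $\varphi:\mathcal{E}_{\mathcal{SP}}\to\mathbb{R}^n_+$ with $\sum_j\varphi_j=\Omega$. Constrained equal-distance rule $CED$: $CED_i(R,\Omega)=\max\{p(R_i)-d,0\}$ if $\sum_jp(R_j)\ge\Omega$ and $CED_i(R,\Omega)=p(R_i)+d$ if $\sum_jp(R_j)<\Omega$, where $d\ge0$ solves $\sum_jCED_j(R,\Omega)=\Omega$. Proportional rule $Pro$: $Pro_i(R,\Omega)=\frac{p(R_i)}{\sum_jp(R_j)}\Omega$ if $\sum_jp(R_j)>0$ and $\Omega/n$ otherwise. Option set $O^\varphi(R_i,\Omega)=\{\varphi_i(R_i,R_{-i},\Omega):R_{-i}\in\mathcal{SP}^{n-1}\}$. $R_i'$ is a manipulation at $(R_i,\Omega)$ if $\varphi_i(R_i',R_{-i},\Omega)P_i\varphi_i(R_i,R_{-i},\Omega)$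 for some $R_{-i}$; an obvious manipulation if moreover each $x'\in O^\varphi(R_i',\Omega)$ satisfies $x'P_ix$ for some $x\in O^\varphi(R_i,\Omega)$. A rule is obviously manipulable if it admits an obvious manipulation. *)

theory Defs
  imports "HOL-Analysis.Analysis" "HOL-Library.Extended_Nonnegative_Real"
begin

text \<open>The outcome space R+ \<union> {\<infinity>} is the type ennreal = [0,\<infinity>].
  A preference is a binary relation on it (R x y: x is at least as good as y).\<close>
type_synonym pref = "ennreal \<Rightarrow> ennreal \<Rightarrow> bool"

definition strict_pref :: "pref \<Rightarrow> ennreal \<Rightarrow> ennreal \<Rightarrow> bool" where
  "strict_pref R x y \<longleftrightarrow> R x y \<and> \<not> R y x"

definition continuous_complete_preorder :: "pref \<Rightarrow> bool" where
  "continuous_complete_preorder R \<longleftrightarrow>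
     (\<forall>x y. R x y \<or> R y x) \<and>
     (\<forall>x y z. R x y \<longrightarrow> R y z \<longrightarrow> R x z) \<and>
     (\<forall>x. closed {y. R y x} \<and> closed {y. R x y})"

definition peak_set :: "pref \<Rightarrow> ennreal set" where
  "peak_set R = {x. \<forall>y. R x y}"

definition SP :: "pref set" where
  "SP = {R. continuous_complete_preorder R \<and>
         (\<exists>p::real. 0 \<le> p \<and> peak_set R = {ennreal p} \<and>
            (\<forall>x x'::real. 0 \<le> x' \<longrightarrow> 0 \<le> x \<longrightarrow>
               ((x' < x \<and> x \<le> p) \<or> (p \<le> x \<and> x < x')) \<longrightarrow>
               strict_pref R (ennreal x) (ennreal x')))}"

definition peak :: "pref \<Rightarrow> real" where
  "peak R = enn2real (the_elem (peak_set R))"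

type_synonym 'n rule = "('n \<Rightarrow> pref) \<Rightarrow> real \<Rightarrow> 'n \<Rightarrow> real"

definition CED :: "('n::finite) rule" where
  "CED R \<Omega> i =
     (if (\<Sum>j\<in>UNIV. peak (R j)) \<ge> \<Omega>
      then (let d = (THE d. d \<ge> 0 \<and> (\<Sum>j\<in>UNIV. max (peak (R j) - d) 0) = \<Omega>)
            in max (peak (R i) - d) 0)
      else (let d = (THE d. d \<ge> 0 \<and> (\<Sum>j\<in>UNIV. peak (R j) + d) = \<Omega>)
            in peak (R i) + d))"

definition Pro :: "('n::finite) rule" where
  "Pro R \<Omega> i =
     (if (\<Sum>j\<in>UNIV. peak (R j)) > 0
      then peak (R i) / (\<Sum>j\<in>UNIV. peak (R j)) * \<Omega>
      else \<Omega> / real CARD('n))"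

definition option_set :: "'n rule \<Rightarrow> 'n \<Rightarrow> pref \<Rightarrow> real \<Rightarrow> real set" where
  "option_set \<phi> i Ri \<Omega> = {\<phi> (R(i := Ri)) \<Omega> i | R. \<forall>j. R j \<in> SP}"

definition manipulation :: "'n rule \<Rightarrow> 'n \<Rightarrow> pref \<Rightarrow> pref \<Rightarrow> real \<Rightarrow> bool" where
  "manipulation \<phi> i Ri Ri' \<Omega> \<longleftrightarrow>
     (\<exists>R. (\<forall>j. R j \<in> SP) \<and>
        strict_pref Ri (ennreal (\<phi> (R(i := Ri')) \<Omega> i)) (ennreal (\<phi> (R(i := Ri)) \<Omega> i)))"

definition obvious_manipulation :: "'n rule \<Rightarrow> 'n \<Rightarrow> pref \<Rightarrow> pref \<Rightarrow> real \<Rightarrow> bool" where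
  "obvious_manipulation \<phi> i Ri Ri' \<Omega> \<longleftrightarrow>
     manipulation \<phi> i Ri Ri' \<Omega> \<and>
     (\<forall>x'\<in>option_set \<phi> i Ri' \<Omega>. \<exists>x\<in>option_set \<phi> i Ri \<Omega>.
        strict_pref Ri (ennreal x') (ennreal x))"

definition obviously_manipulable :: "'n rule \<Rightarrow> bool" where
  "obviously_manipulable \<phi> \<longleftrightarrow>
     (\<exists>i Ri Ri' \<Omega>. Ri \<in> SP \<and> Ri' \<in> SP \<and> \<Omega> > 0 \<and> obvious_manipulation \<phi> i Ri Ri' \<Omega>)"

end

theory Submission
  imports Defs
begin

text \<open>Let agent i have the symmetric preference peaked at 1, let every other agent have peak 0,
  and let \<Omega> = n + 2. Reporting truthfully, i receives 1 + (n + 1)/n under CED and all of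
  \<Omega> = n + 2 under Pro, both at distance more than 1 from the peak. Reporting peak 0 instead, i
  receives at most \<Omega>/n \<le> 2 whatever the others report, so every outcome of this lie lies within
  distance 1 of the peak and beats the truthful outcome above: the lie is an obvious
  manipulation.\<close>

lemma continuous_on_minus_const_ennreal: "continuous_on A (\<lambda>x::ennreal. x - ennreal c)"
proof (rule continuous_on_subset[OF continuous_onI_mono])
  have "surj (\<lambda>x::ennreal. x - ennreal c)"
    by (rule surjI[of _ "\<lambda>y. y + ennreal c"]) simp
  then show "open (range (\<lambda>x::ennreal. x - ennreal c))" by simp
qed (auto intro: ennreal_minus_mono)

lemma continuous_on_const_minus_ennreal: "continuous_on A (\<lambda>x::ennreal. ennreal c - x)"
proof -
  have "continuous_on A (\<lambda>x. ennreal c - min x (ennreal c))"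
    by (intro continuous_on_diff_ennreal continuous_on_const continuous_on_min continuous_on_id)
       (auto simp: min_def dest: le_less_trans[OF _ ennreal_less_top])
  also have "(\<lambda>x. ennreal c - min x (ennreal c)) = (\<lambda>x. ennreal c - x)"
    by (auto simp: fun_eq_iff min_def diff_eq_0_iff_ennreal)
  finally show ?thesis .
qed

lemma continuous_complete_preorder_of_continuous:
  fixes u :: "ennreal \<Rightarrow> 'a::linorder_topology"
  assumes "continuous_on UNIV u"
  shows "continuous_complete_preorder (\<lambda>x y. u x \<le> u y)"
  unfolding continuous_complete_preorder_def
  using assms by (auto intro!: closed_Collect_le continuous_on_const)

definition peak_distance :: "real \<Rightarrow> ennreal \<Rightarrow> ennreal" where
  "peak_distance p x = (x - ennreal p) + (ennreal p - x)"

definition symmetric_pref :: "real \<Rightarrow> pref" where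
  "symmetric_pref p = (\<lambda>x y. peak_distance p x \<le> peak_distance p y)"

lemma peak_distance_ennreal:
  assumes "0 \<le> a" "0 \<le> p"
  shows "peak_distance p (ennreal a) = ennreal \<bar>a - p\<bar>"
  using assms by (cases "a \<le> p") (auto simp: peak_distance_def ennreal_minus ennreal_eq_0_iff)

lemma peak_distance_top [simp]: "peak_distance p top = top"
  by (simp add: peak_distance_def)

lemma continuous_on_peak_distance: "continuous_on UNIV (peak_distance p)"
  unfolding peak_distance_def
  by (intro continuous_on_add continuous_on_minus_const_ennreal continuous_on_const_minus_ennreal)

lemma strict_pref_symmetric_pref_iff:
  assumes "0 \<le> a" "0 \<le> b" "0 \<le> p"
  shows "strict_pref (symmetric_pref p) (ennreal a) (ennreal b) \<longleftrightarrow> \<bar>a - p\<bar> < \<bar>b - p\<bar>"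
  using assms by (auto simp: strict_pref_def symmetric_pref_def peak_distance_ennreal ennreal_le_iff)

lemma peak_set_symmetric_pref:
  assumes "0 \<le> p"
  shows "peak_set (symmetric_pref p) = {ennreal p}"
proof (intro equalityI subsetI)
  fix x assume "x \<in> peak_set (symmetric_pref p)"
  then have "peak_distance p x \<le> peak_distance p (ennreal p)"
    by (simp add: peak_set_def symmetric_pref_def)
  then have "peak_distance p x \<le> 0"
    using assms by (simp add: peak_distance_ennreal)
  then show "x \<in> {ennreal p}"
    using assms by (cases x rule: ennreal_cases) (auto simp: peak_distance_ennreal)
qed (use assms in \<open>auto simp: peak_set_def symmetric_pref_def peak_distance_ennreal\<close>)

lemma symmetric_pref_in_SP:
  assumes "0 \<le> p"
  shows "symmetric_pref p \<in> SP"
proof -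
  have "continuous_complete_preorder (symmetric_pref p)"
    unfolding symmetric_pref_def
    by (rule continuous_complete_preorder_of_continuous[OF continuous_on_peak_distance])
  moreover have "strict_pref (symmetric_pref p) (ennreal x) (ennreal x')"
    if "0 \<le> x'" "0 \<le> x" "x' < x \<and> x \<le> p \<or> p \<le> x \<and> x < x'" for x x'
    using that assms by (subst strict_pref_symmetric_pref_iff) auto
  ultimately show ?thesis
    unfolding SP_def using assms peak_set_symmetric_pref[OF assms] by blast
qed

lemma peak_symmetric_pref [simp]: "0 \<le> p \<Longrightarrow> peak (symmetric_pref p) = p"
  by (simp add: peak_def peak_set_symmetric_pref)

lemma peak_nonneg: "R \<in> SP \<Longrightarrow> 0 \<le> peak R"
  unfolding SP_def peak_def by auto

lemma fun_upd_symmetric_pref_in_SP: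
  "\<forall>j. R j \<in> SP \<Longrightarrow> 0 \<le> q \<Longrightarrow> \<forall>j. (R(i := symmetric_pref q)) j \<in> SP"
  by (simp add: symmetric_pref_in_SP)

lemma sum_peak_zero_profile_upd:
  assumes "0 \<le> q"
  shows "(\<Sum>j\<in>UNIV. peak (((\<lambda>_::'n::finite. symmetric_pref 0)(i := symmetric_pref q)) j)) = q"
proof -
  have "peak (((\<lambda>_::'n. symmetric_pref 0)(i := symmetric_pref q)) j) = (if j = i then q else 0)"
    for j
    using assms by simp
  then show ?thesis by simp
qed

lemma obviously_manipulableI:
  fixes \<phi> :: "'n rule"
  assumes "0 < \<Omega>" "0 \<le> p" "0 \<le> q" and R\<^sub>0: "\<forall>j. R\<^sub>0 j \<in> SP"
    and nonneg: "\<And>R. \<forall>j. R j \<in> SP \<Longrightarrow> 0 \<le> \<phi> R \<Omega> i"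
    and lie_closer: "\<And>R. \<forall>j. R j \<in> SP \<Longrightarrow>
      \<bar>\<phi> (R(i := symmetric_pref q)) \<Omega> i - p\<bar> < \<bar>\<phi> (R\<^sub>0(i := symmetric_pref p)) \<Omega> i - p\<bar>"
  shows "obviously_manipulable \<phi>"
proof -
  let ?truth = "\<phi> (R\<^sub>0(i := symmetric_pref p)) \<Omega> i"
  have lie_better: "strict_pref (symmetric_pref p) (ennreal (\<phi> (R(i := symmetric_pref q)) \<Omega> i))
      (ennreal ?truth)" if "\<forall>j. R j \<in> SP" for R
  proof -
    have lie_profile: "\<forall>j. (R(i := symmetric_pref q)) j \<in> SP"
      using that \<open>0 \<le> q\<close> by (rule fun_upd_symmetric_pref_in_SP)
    have truth_profile: "\<forall>j. (R\<^sub>0(i := symmetric_pref p)) j \<in> SP"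
      using R\<^sub>0 \<open>0 \<le> p\<close> by (rule fun_upd_symmetric_pref_in_SP)
    show ?thesis
      by (simp add: strict_pref_symmetric_pref_iff nonneg[OF lie_profile] nonneg[OF truth_profile]
          lie_closer[OF that] \<open>0 \<le> p\<close>)
  qed
  have "manipulation \<phi> i (symmetric_pref p) (symmetric_pref q) \<Omega>"
    unfolding manipulation_def using R\<^sub>0 lie_better by blast
  moreover have "?truth \<in> option_set \<phi> i (symmetric_pref p) \<Omega>"
    unfolding option_set_def using R\<^sub>0 by blast
  moreover have "\<forall>x'\<in>option_set \<phi> i (symmetric_pref q) \<Omega>.
      strict_pref (symmetric_pref p) (ennreal x') (ennreal ?truth)"
    unfolding option_set_def using lie_better by blast
  ultimately have "obvious_manipulation \<phi> i (symmetric_pref p) (symmetric_pref q) \<Omega>"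
    unfolding obvious_manipulation_def by blast
  then show ?thesis
    unfolding obviously_manipulable_def using assms(1-3) symmetric_pref_in_SP by blast
qed

lemma sum_excess_strict_antimono:
  fixes p :: "'a \<Rightarrow> real"
  assumes "finite A" "a < b" "0 < (\<Sum>j\<in>A. max (p j - a) 0)"
  shows "(\<Sum>j\<in>A. max (p j - b) 0) < (\<Sum>j\<in>A. max (p j - a) 0)"
proof (rule sum_strict_mono_ex1[OF \<open>finite A\<close>])
  show "\<forall>j\<in>A. max (p j - b) 0 \<le> max (p j - a) 0"
    using \<open>a < b\<close> by (intro ballI max.mono) simp_all
  from assms(3) have "(\<Sum>j\<in>A. max (p j - a) 0) \<noteq> 0" by simp
  then obtain j where "j \<in> A" "max (p j - a) 0 \<noteq> 0"
    by (rule sum.not_neutral_contains_not_neutral)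
  then show "\<exists>j\<in>A. max (p j - b) 0 < max (p j - a) 0"
    using \<open>a < b\<close> by (intro bexI[of _ j]) (auto simp: max_def)
qed

lemma ex1_truncation_level:
  fixes p :: "'a \<Rightarrow> real"
  assumes "finite A" "\<And>j. j \<in> A \<Longrightarrow> 0 \<le> p j" "0 < \<Omega>" "\<Omega> \<le> (\<Sum>j\<in>A. p j)"
  shows "\<exists>!d. 0 \<le> d \<and> (\<Sum>j\<in>A. max (p j - d) 0) = \<Omega>"
proof -
  define S where "S = (\<Sum>j\<in>A. p j)"
  define f where "f d = (\<Sum>j\<in>A. max (p j - d) 0)" for d
  have "0 \<le> S"
    unfolding S_def using assms(2) by (simp add: sum_nonneg)
  have "f 0 = S"
    unfolding f_def S_def using assms(2) by (intro sum.cong) (simp_all add: max_absorb1)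
  moreover have "f S = 0"
  proof -
    have "p j \<le> S" if "j \<in> A" for j
      unfolding S_def using assms(1,2) that by (intro member_le_sum) auto
    then show ?thesis
      unfolding f_def by (intro sum.neutral ballI max_absorb2) simp
  qed
  moreover have "continuous_on {0..S} f"
    unfolding f_def by (intro continuous_intros)
  ultimately obtain d where "0 \<le> d" "f d = \<Omega>"
    using IVT2'[of f S \<Omega> 0] \<open>0 \<le> S\<close> assms(3,4) unfolding S_def by auto
  moreover have "d' = d" if "0 \<le> d'" "f d' = \<Omega>" for d'
    using sum_excess_strict_antimono[OF assms(1), of d d' p]
      sum_excess_strict_antimono[OF assms(1), of d' d p] \<open>f d = \<Omega>\<close> that(2) assms(3)
    unfolding f_def by (cases d d' rule: linorder_cases) simp_all
  ultimately show ?thesis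
    unfolding f_def by blast
qed

lemma CED_excess:
  fixes R :: "'n::finite \<Rightarrow> pref"
  assumes "(\<Sum>j\<in>UNIV. peak (R j)) < \<Omega>"
  shows "CED R \<Omega> i = peak (R i) + (\<Omega> - (\<Sum>j\<in>UNIV. peak (R j))) / CARD('n)"
proof -
  let ?S = "\<Sum>j\<in>UNIV. peak (R j)"
  let ?N = "real CARD('n)"
  have sum_shift: "(\<Sum>j\<in>UNIV. peak (R j) + d) = ?S + ?N * d" for d
    by (simp add: sum.distrib)
  have "(THE d. 0 \<le> d \<and> (\<Sum>j\<in>UNIV. peak (R j) + d) = \<Omega>) = (\<Omega> - ?S) / ?N"
  proof (rule the_equality)
    show "0 \<le> (\<Omega> - ?S) / ?N \<and> (\<Sum>j\<in>UNIV. peak (R j) + (\<Omega> - ?S) / ?N) = \<Omega>"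
      using assms by (simp add: sum_shift)
    show "d = (\<Omega> - ?S) / ?N" if "0 \<le> d \<and> (\<Sum>j\<in>UNIV. peak (R j) + d) = \<Omega>" for d
      using that unfolding sum_shift by (simp add: eq_divide_eq algebra_simps)
  qed
  then show ?thesis
    using assms by (simp add: CED_def Let_def)
qed

lemma CED_deficit:
  fixes R :: "'n::finite \<Rightarrow> pref"
  assumes "\<forall>j. R j \<in> SP" "0 < \<Omega>" "\<Omega> \<le> (\<Sum>j\<in>UNIV. peak (R j))"
  shows "\<exists>d\<ge>0. CED R \<Omega> i = max (peak (R i) - d) 0"
proof -
  let ?d = "THE d. 0 \<le> d \<and> (\<Sum>j\<in>UNIV. max (peak (R j) - d) 0) = \<Omega>"
  have "\<exists>!d. 0 \<le> d \<and> (\<Sum>j\<in>UNIV. max (peak (R j) - d) 0) = \<Omega>"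
    using assms by (intro ex1_truncation_level) (simp_all add: peak_nonneg)
  then have "0 \<le> ?d"
    by (rule theI'[THEN conjunct1])
  moreover have "CED R \<Omega> i = max (peak (R i) - ?d) 0"
    using assms(3) by (simp add: CED_def Let_def)
  ultimately show ?thesis by blast
qed

lemma CED_bounds:
  fixes R :: "'n::finite \<Rightarrow> pref"
  assumes "\<forall>j. R j \<in> SP" "0 < \<Omega>"
  shows "0 \<le> CED R \<Omega> i \<and> CED R \<Omega> i \<le> peak (R i) + \<Omega> / CARD('n)"
proof (cases "(\<Sum>j\<in>UNIV. peak (R j)) < \<Omega>")
  case True
  have "0 \<le> (\<Sum>j\<in>UNIV. peak (R j))"
    using assms(1) by (simp add: sum_nonneg peak_nonneg)
  then show ?thesis
    using True assms by (simp add: CED_excess peak_nonneg divide_right_mono)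
next
  case False
  then obtain d where "0 \<le> d" "CED R \<Omega> i = max (peak (R i) - d) 0"
    using CED_deficit[of R \<Omega> i] assms by auto
  moreover have "0 \<le> peak (R i)" "0 \<le> \<Omega> / CARD('n)"
    using assms by (simp_all add: peak_nonneg)
  ultimately show ?thesis by simp
qed

lemma Pro_nonneg: "\<forall>j. R j \<in> SP \<Longrightarrow> 0 \<le> \<Omega> \<Longrightarrow> 0 \<le> Pro R \<Omega> i"
  by (simp add: Pro_def peak_nonneg sum_nonneg)

lemma Pro_le_of_peak_zero:
  fixes R :: "'n::finite \<Rightarrow> pref"
  shows "peak (R i) = 0 \<Longrightarrow> 0 \<le> \<Omega> \<Longrightarrow> Pro R \<Omega> i \<le> \<Omega> / CARD('n)"
  by (simp add: Pro_def)

lemma CED_obviously_manipulable: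
  assumes "CARD('n::finite) \<ge> 2"
  shows "obviously_manipulable (CED :: 'n rule)"
proof -
  fix i :: 'n
  let ?N = "real CARD('n)" and ?R\<^sub>0 = "\<lambda>_::'n. symmetric_pref 0"
  have "CED (?R\<^sub>0(i := symmetric_pref 1)) (?N + 2) i = 1 + (?N + 1) / ?N"
    using CED_excess[of "?R\<^sub>0(i := symmetric_pref 1)" "?N + 2" i] sum_peak_zero_profile_upd[of 1 i]
    by simp
  then have far: "1 < \<bar>CED (?R\<^sub>0(i := symmetric_pref 1)) (?N + 2) i - 1\<bar>"
    by simp
  have lie: "0 \<le> CED (R(i := symmetric_pref 0)) (?N + 2) i \<and>
      CED (R(i := symmetric_pref 0)) (?N + 2) i \<le> 2" if "\<forall>j. R j \<in> SP" for R
  proof -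
    have "(?N + 2) / ?N \<le> 2"
      using assms by (simp add: field_simps)
    moreover have "\<forall>j. (R(i := symmetric_pref 0)) j \<in> SP"
      using that by (rule fun_upd_symmetric_pref_in_SP) simp
    ultimately show ?thesis
      using CED_bounds[of "R(i := symmetric_pref 0)" "?N + 2" i] by simp
  qed
  show ?thesis
  proof (rule obviously_manipulableI[where \<Omega> = "?N + 2" and p = 1 and q = 0 and R\<^sub>0 = ?R\<^sub>0])
    show "\<forall>j. ?R\<^sub>0 j \<in> SP"
      by (simp add: symmetric_pref_in_SP)
    show "0 \<le> CED R (?N + 2) i" if "\<forall>j. R j \<in> SP" for R
      using CED_bounds[OF that] by simp
    show "\<bar>CED (R(i := symmetric_pref 0)) (?N + 2) i - 1\<bar>
        < \<bar>CED (?R\<^sub>0(i := symmetric_pref 1)) (?N + 2) i - 1\<bar>" if "\<forall>j. R j \<in> SP" for R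
      using lie[OF that] far by arith
  qed simp_all
qed

lemma Pro_obviously_manipulable:
  assumes "CARD('n::finite) \<ge> 2"
  shows "obviously_manipulable (Pro :: 'n rule)"
proof -
  fix i :: 'n
  let ?N = "real CARD('n)" and ?R\<^sub>0 = "\<lambda>_::'n. symmetric_pref 0"
  have "Pro (?R\<^sub>0(i := symmetric_pref 1)) (?N + 2) i = ?N + 2"
    using sum_peak_zero_profile_upd[of 1 i] by (simp add: Pro_def)
  then have far: "1 < \<bar>Pro (?R\<^sub>0(i := symmetric_pref 1)) (?N + 2) i - 1\<bar>"
    using assms by simp
  have lie: "0 \<le> Pro (R(i := symmetric_pref 0)) (?N + 2) i \<and>
      Pro (R(i := symmetric_pref 0)) (?N + 2) i \<le> 2" if "\<forall>j. R j \<in> SP" for R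
  proof -
    have "(?N + 2) / ?N \<le> 2"
      using assms by (simp add: field_simps)
    moreover have "\<forall>j. (R(i := symmetric_pref 0)) j \<in> SP"
      using that by (rule fun_upd_symmetric_pref_in_SP) simp
    ultimately show ?thesis
      using Pro_le_of_peak_zero[of "R(i := symmetric_pref 0)" i "?N + 2"]
        Pro_nonneg[of "R(i := symmetric_pref 0)" "?N + 2" i] by simp
  qed
  show ?thesis
  proof (rule obviously_manipulableI[where \<Omega> = "?N + 2" and p = 1 and q = 0 and R\<^sub>0 = ?R\<^sub>0])
    show "\<forall>j. ?R\<^sub>0 j \<in> SP"
      by (simp add: symmetric_pref_in_SP)
    show "0 \<le> Pro R (?N + 2) i" if "\<forall>j. R j \<in> SP" for R
      using Pro_nonneg[OF that] by simp
    show "\<bar>Pro (R(i := symmetric_pref 0)) (?N + 2) i - 1\<bar>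
        < \<bar>Pro (?R\<^sub>0(i := symmetric_pref 1)) (?N + 2) i - 1\<bar>" if "\<forall>j. R j \<in> SP" for R
      using lie[OF that] far by arith
  qed simp_all
qed

theorem proposition2:
  assumes "CARD('n::finite) \<ge> 2"
  shows "obviously_manipulable (CED :: 'n rule) \<and> obviously_manipulable (Pro :: 'n rule)"
  using CED_obviously_manipulable[OF assms] Pro_obviously_manipulable[OF assms] by blast

end
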